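(* Let $\alpha: I\to M$ be a unit-speed curve on an oriented surface $M\subset E^3$ with Darboux frame $\{T,V,U\}$ and curvatures $k_g,k_n,\tau_g$. Consider the curve $\gamma$ defined in either of the following two cases: (a) $k_n\equiv0$, $k_g$ and $\tau_g$ nowhere zero, and $\gamma(s)=\alpha(s)+\frac{1}{k_g(s)}V(s)-\frac{k_g'(s)}{k_g(s)^2\tau_g(s)}U(s)$; (b) $k_n$ nowhere zero, $\beta$ an antiderivative of $k_g\tau_g/k_n$, $B$ an antiderivative of $e^{\beta}\tau_g/k_n$, $c_8$ a real constant, $y_2=e^{-\beta}(B+c_8)$, $y_3=-\frac{k_g}{k_n}y_2+\frac{1}{k_n}$, and $\gamma(s)=\alpha(s)+y_2(s)V(s)+y_3(s)U(s)$. In either case assume $\gamma$ is regular. Then $\gamma$ is a general helix if and only if $\alpha$ is an isophote curve on $M$.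
   Context: $M$ is an oriented surface in Euclidean 3-space $E^3$ and $\alpha:I\to M$ is a unit-speed curve with arc-length parameter $s$. Its Darboux frame $\{T,V,U\}$ consists of the unit tangent $T=\alpha'$, the unit surface normal $U$ of $M$ along $\alpha$, and $V=U\times T$; it satisfies $T'=k_gV+k_nU$, $V'=-k_gT+\tau_gU$, $U'=-k_nT-\tau_gV$, where $k_g,k_n,\tau_g$ are the geodesic curvature, normal curvature and geodesic torsion. A regular curve is a general helix if its unit tangent makes a constant angle with a fixed direction. $\alpha$ is an isophote curve if $\langle U,l\rangle$ is constant for some fixed unit vector $l$. *)

theory Defs
  imports "HOL-Analysis.Analysis" "HOL-Analysis.Cross3"
begin

text \<open>Darboux frame of a unit-speed curve alpha on an oriented surface, along the parameter
  set I: T = alpha', U = unit surface normal along alpha, V = U x T, with the Darboux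
  (Frenet-type) equations involving geodesic curvature kg, normal curvature kn and
  geodesic torsion tg.\<close>
definition darboux_frame ::
  "real set \<Rightarrow> (real \<Rightarrow> real^3) \<Rightarrow> (real \<Rightarrow> real^3) \<Rightarrow> (real \<Rightarrow> real^3) \<Rightarrow> (real \<Rightarrow> real^3)
   \<Rightarrow> (real \<Rightarrow> real) \<Rightarrow> (real \<Rightarrow> real) \<Rightarrow> (real \<Rightarrow> real) \<Rightarrow> bool" where
  "darboux_frame I \<alpha> T V U kg kn tg \<longleftrightarrow>
     (\<forall>s\<in>I.
        (\<alpha> has_vector_derivative T s) (at s) \<and>
        norm (T s) = 1 \<and> norm (U s) = 1 \<and> T s \<bullet> U s = 0 \<and>
        V s = cross3 (U s) (T s) \<and>
        (T has_vector_derivative (kg s *\<^sub>R V s + kn s *\<^sub>R U s)) (at s) \<and>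
        (V has_vector_derivative (- kg s *\<^sub>R T s + tg s *\<^sub>R U s)) (at s) \<and>
        (U has_vector_derivative (- kn s *\<^sub>R T s - tg s *\<^sub>R V s)) (at s))"

definition regular_curve :: "(real \<Rightarrow> real^3) \<Rightarrow> real set \<Rightarrow> bool" where
  "regular_curve \<gamma> I \<longleftrightarrow> (\<forall>s\<in>I. \<gamma> differentiable (at s) \<and> vector_derivative \<gamma> (at s) \<noteq> 0)"

definition unit_tangent :: "(real \<Rightarrow> real^3) \<Rightarrow> real \<Rightarrow> real^3" where
  "unit_tangent \<gamma> s = vector_derivative \<gamma> (at s) /\<^sub>R norm (vector_derivative \<gamma> (at s))"

definition general_helix :: "(real \<Rightarrow> real^3) \<Rightarrow> real set \<Rightarrow> bool" where
  "general_helix \<gamma> I \<longleftrightarrow>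
     (\<exists>d::real^3. norm d = 1 \<and> (\<exists>c. \<forall>s\<in>I. unit_tangent \<gamma> s \<bullet> d = c))"

definition isophote :: "real set \<Rightarrow> (real \<Rightarrow> real^3) \<Rightarrow> bool" where
  "isophote I U \<longleftrightarrow> (\<exists>l::real^3. norm l = 1 \<and> (\<exists>c. \<forall>s\<in>I. U s \<bullet> l = c))"

end

theory Submission
  imports Defs
begin

text \<open>In both cases the coefficients of \<gamma> in the Darboux frame are chosen so that the T- and
  V-components of \<gamma>' vanish. Thus \<gamma>' = f U with f nowhere zero by regularity, and the unit
  tangent of \<gamma> is sgn f \<cdot> U. For a helix axis d, U \<bullet> d then takes at most two values
  \<plusminus>c and is continuous, hence constant on the interval. For an isophote direction l with
  U \<bullet> l = c \<noteq> 0, the derivative f c of \<gamma> \<bullet> l never vanishes; f need not be continuous,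
  but by Darboux's theorem it still has constant sign, so the unit tangent makes a constant
  angle with l.\<close>

lemma DERIV_zero_between_pos_neg:
  fixes g g' :: "real \<Rightarrow> real"
  assumes "a < b" and der: "\<And>x. x \<in> {a..b} \<Longrightarrow> (g has_real_derivative g' x) (at x)"
    and "g' a > 0" and "g' b < 0"
  shows "\<exists>x. a < x \<and> x < b \<and> g' x = 0"
proof -
  have "continuous_on {a..b} g"
    using der by (meson DERIV_isCont continuous_at_imp_continuous_on)
  then obtain x where x: "x \<in> {a..b}" and max: "\<And>y. y \<in> {a..b} \<Longrightarrow> g y \<le> g x"
    using continuous_attains_sup[of "{a..b}" g] \<open>a < b\<close> by auto
  have "x \<noteq> a"
  proof
    assume "x = a"
    obtain d where "d > 0" and inc: "\<And>h. 0 < h \<Longrightarrow> h < d \<Longrightarrow> g a < g (a + h)"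
      using DERIV_pos_inc_right[OF der \<open>g' a > 0\<close>] \<open>a < b\<close> by auto
    define h where "h = min (d/2) (b - a)"
    have "g a < g (a + h)" "a + h \<in> {a..b}"
      using inc \<open>d > 0\<close> \<open>a < b\<close> by (simp_all add: h_def)
    with max \<open>x = a\<close> show False by fastforce
  qed
  moreover have "x \<noteq> b"
  proof
    assume "x = b"
    obtain d where "d > 0" and dec: "\<And>h. 0 < h \<Longrightarrow> h < d \<Longrightarrow> g b < g (b - h)"
      using DERIV_neg_dec_left[OF der \<open>g' b < 0\<close>] \<open>a < b\<close> by auto
    define h where "h = min (d/2) (b - a)"
    have "g b < g (b - h)" "b - h \<in> {a..b}"
      using dec \<open>d > 0\<close> \<open>a < b\<close> by (simp_all add: h_def)
    with max \<open>x = b\<close> show False by fastforce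
  qed
  ultimately have inside: "a < x" "x < b" using x by auto
  have "g' x = 0"
  proof (rule DERIV_local_max)
    show "(g has_real_derivative g' x) (at x)" using der x .
    show "0 < min (x - a) (b - x)" using inside by simp
    show "\<forall>y. \<bar>x - y\<bar> < min (x - a) (b - x) \<longrightarrow> g y \<le> g x"
      using max by (auto simp: abs_if)
  qed
  with inside show ?thesis by blast
qed

lemma DERIV_nonzero_sign_constant:
  fixes g g' :: "real \<Rightarrow> real"
  assumes I: "is_interval I"
    and der: "\<And>s. s \<in> I \<Longrightarrow> (g has_real_derivative g' s) (at s)"
    and nz: "\<And>s. s \<in> I \<Longrightarrow> g' s \<noteq> 0"
  shows "(\<forall>s\<in>I. g' s > 0) \<or> (\<forall>s\<in>I. g' s < 0)"
proof (rule ccontr)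
  assume "\<not> ?thesis"
  then obtain a b where a: "a \<in> I" "g' a > 0" and b: "b \<in> I" "g' b < 0"
    using nz by (meson linorder_neqE_linordered_idom)
  have between: "{x..y} \<subseteq> I" if "x \<in> I" "y \<in> I" for x y
    using mem_is_interval_1_I[OF I that] by auto
  have "a \<noteq> b" using a b by auto
  then consider "a < b" | "b < a" by linarith
  then show False
  proof cases
    case 1
    then obtain x where "a < x" "x < b" "g' x = 0"
      using DERIV_zero_between_pos_neg[of a b g g'] der between[OF a(1) b(1)] a b by blast
    moreover have "x \<in> I" using between[OF a(1) b(1)] \<open>a < x\<close> \<open>x < b\<close> by auto
    ultimately show False using nz by blast
  next
    case 2
    have "((\<lambda>x. - g x) has_real_derivative - g' x) (at x)" if "x \<in> {b..a}" for x
      using der between[OF b(1) a(1)] that by (blast intro: DERIV_minus)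
    then obtain x where "b < x" "x < a" "- g' x = 0"
      using DERIV_zero_between_pos_neg[of b a "\<lambda>x. - g x" "\<lambda>x. - g' x"] 2 a b by auto
    moreover have "x \<in> I" using between[OF b(1) a(1)] \<open>b < x\<close> \<open>x < a\<close> by auto
    ultimately show False using nz by auto
  qed
qed

lemma has_vector_derivative_darboux_combination:
  assumes "darboux_frame I \<alpha> T V U kg kn tg" and "s \<in> I"
    and "(a has_real_derivative a') (at s)" and "(b has_real_derivative b') (at s)"
  shows "((\<lambda>s. \<alpha> s + a s *\<^sub>R V s + b s *\<^sub>R U s) has_vector_derivative
           (1 - a s * kg s - b s * kn s) *\<^sub>R T s + (a' - b s * tg s) *\<^sub>R V s
             + (a s * tg s + b') *\<^sub>R U s) (at s)"
proof -
  have "(\<alpha> has_vector_derivative T s) (at s)"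
    and "(V has_vector_derivative (- kg s *\<^sub>R T s + tg s *\<^sub>R U s)) (at s)"
    and "(U has_vector_derivative (- kn s *\<^sub>R T s - tg s *\<^sub>R V s)) (at s)"
    using assms(1,2) unfolding darboux_frame_def by auto
  then have "((\<lambda>s. \<alpha> s + a s *\<^sub>R V s + b s *\<^sub>R U s) has_vector_derivative
      T s + (a s *\<^sub>R (- kg s *\<^sub>R T s + tg s *\<^sub>R U s) + a' *\<^sub>R V s)
        + (b s *\<^sub>R (- kn s *\<^sub>R T s - tg s *\<^sub>R V s) + b' *\<^sub>R U s)) (at s)"
    using assms(3,4) by (intro has_vector_derivative_add has_vector_derivative_scaleR)
  then show ?thesis
    by (simp add: algebra_simps)
qed

definition velocity_parallel :: "(real \<Rightarrow> real^3) \<Rightarrow> (real \<Rightarrow> real^3) \<Rightarrow> real set \<Rightarrow> bool" where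
  "velocity_parallel \<gamma> U I \<longleftrightarrow> (\<exists>f. \<forall>s\<in>I. (\<gamma> has_vector_derivative f s *\<^sub>R U s) (at s))"

lemma velocity_parallel_darboux_combination:
  assumes "open I" and frame: "darboux_frame I \<alpha> T V U kg kn tg"
    and \<gamma>: "\<And>s. s \<in> I \<Longrightarrow> \<gamma> s = \<alpha> s + a s *\<^sub>R V s + b s *\<^sub>R U s"
    and diff: "\<And>s. s \<in> I \<Longrightarrow> a differentiable (at s) \<and> b differentiable (at s)"
    and T_coeff: "\<And>s. s \<in> I \<Longrightarrow> a s * kg s + b s * kn s = 1"
    and V_coeff: "\<And>s. s \<in> I \<Longrightarrow> deriv a s = b s * tg s"
  shows "velocity_parallel \<gamma> U I"
  unfolding velocity_parallel_def
proof (intro exI[of _ "\<lambda>s. a s * tg s + deriv b s"] ballI)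
  fix s assume "s \<in> I"
  have "(a has_real_derivative deriv a s) (at s)" "(b has_real_derivative deriv b s) (at s)"
    using diff[OF \<open>s \<in> I\<close>] by (simp_all add: DERIV_deriv_iff_real_differentiable)
  note combination = has_vector_derivative_darboux_combination[OF frame \<open>s \<in> I\<close> this]
  have "1 - a s * kg s - b s * kn s = 0" "deriv a s - b s * tg s = 0"
    using T_coeff[OF \<open>s \<in> I\<close>] V_coeff[OF \<open>s \<in> I\<close>] by simp_all
  with combination have "((\<lambda>s. \<alpha> s + a s *\<^sub>R V s + b s *\<^sub>R U s) has_vector_derivative
      (a s * tg s + deriv b s) *\<^sub>R U s) (at s)"
    by (simp only: scaleR_zero_left add_0_left)
  then show "(\<gamma> has_vector_derivative (a s * tg s + deriv b s) *\<^sub>R U s) (at s)"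
    by (rule has_vector_derivative_transform_within_open[OF _ \<open>open I\<close> \<open>s \<in> I\<close>])
      (simp add: \<gamma>)
qed

lemma velocity_parallel_case_a:
  assumes "open I" and frame: "darboux_frame I \<alpha> T V U kg kn tg"
    and H: "\<forall>s\<in>I. kn s = 0 \<and> kg s \<noteq> 0 \<and> tg s \<noteq> 0 \<and>
              kg differentiable (at s) \<and> (deriv kg) differentiable (at s) \<and>
              tg differentiable (at s) \<and>
              \<gamma> s = \<alpha> s + (1 / kg s) *\<^sub>R V s
                     - (deriv kg s / ((kg s)\<^sup>2 * tg s)) *\<^sub>R U s"
  shows "velocity_parallel \<gamma> U I"
proof (rule velocity_parallel_darboux_combination[OF \<open>open I\<close> frame])
  fix s assume "s \<in> I"
  then have "kn s = 0" "kg s \<noteq> 0" "tg s \<noteq> 0"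
    and kg: "kg differentiable (at s)" "deriv kg differentiable (at s)"
    and tg: "tg differentiable (at s)"
    and \<gamma>: "\<gamma> s = \<alpha> s + (1 / kg s) *\<^sub>R V s - (deriv kg s / ((kg s)\<^sup>2 * tg s)) *\<^sub>R U s"
    using H by auto
  show "\<gamma> s = \<alpha> s + (1 / kg s) *\<^sub>R V s + (- (deriv kg s / ((kg s)\<^sup>2 * tg s))) *\<^sub>R U s"
    using \<gamma> by simp
  show "(\<lambda>s. 1 / kg s) differentiable (at s) \<and>
      (\<lambda>s. - (deriv kg s / ((kg s)\<^sup>2 * tg s))) differentiable (at s)"
    using kg tg \<open>kg s \<noteq> 0\<close> \<open>tg s \<noteq> 0\<close> by simp
  show "1 / kg s * kg s + - (deriv kg s / ((kg s)\<^sup>2 * tg s)) * kn s = 1"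
    using \<open>kn s = 0\<close> \<open>kg s \<noteq> 0\<close> by simp
  have "((\<lambda>s. 1 / kg s) has_real_derivative - (deriv kg s / (kg s)\<^sup>2)) (at s)"
    using kg(1) \<open>kg s \<noteq> 0\<close> unfolding DERIV_deriv_iff_real_differentiable[symmetric]
    by (auto intro!: derivative_eq_intros simp: power2_eq_square)
  then show "deriv (\<lambda>s. 1 / kg s) s = - (deriv kg s / ((kg s)\<^sup>2 * tg s)) * tg s"
    using \<open>tg s \<noteq> 0\<close> by (simp add: DERIV_imp_deriv)
qed

lemma velocity_parallel_case_b:
  assumes "open I" and frame: "darboux_frame I \<alpha> T V U kg kn tg"
    and H: "\<forall>s\<in>I. kn s \<noteq> 0 \<and>
              kg differentiable (at s) \<and> kn differentiable (at s) \<and>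
              (\<beta> has_real_derivative (kg s * tg s / kn s)) (at s) \<and>
              (B has_real_derivative (exp (\<beta> s) * tg s / kn s)) (at s) \<and>
              (let y2 = exp (- \<beta> s) * (B s + c8);
                   y3 = - (kg s / kn s) * y2 + 1 / kn s
               in \<gamma> s = \<alpha> s + y2 *\<^sub>R V s + y3 *\<^sub>R U s)"
  shows "velocity_parallel \<gamma> U I"
proof -
  define y2 where "y2 s = exp (- \<beta> s) * (B s + c8)" for s
  define y3 where "y3 s = - (kg s / kn s) * y2 s + 1 / kn s" for s
  show ?thesis
  proof (rule velocity_parallel_darboux_combination[OF \<open>open I\<close> frame, of \<gamma> y2 y3])
    fix s assume "s \<in> I"
    then have "kn s \<noteq> 0" and diff: "kg differentiable (at s)" "kn differentiable (at s)"
      and \<beta>: "(\<beta> has_real_derivative (kg s * tg s / kn s)) (at s)"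
      and B: "(B has_real_derivative (exp (\<beta> s) * tg s / kn s)) (at s)"
      and \<gamma>: "\<gamma> s = \<alpha> s + y2 s *\<^sub>R V s + y3 s *\<^sub>R U s"
      using H by (auto simp: y2_def y3_def Let_def)
    show "\<gamma> s = \<alpha> s + y2 s *\<^sub>R V s + y3 s *\<^sub>R U s"
      by (fact \<gamma>)
    have y2': "(y2 has_real_derivative - (kg s * tg s / kn s) * y2 s + tg s / kn s) (at s)"
      unfolding y2_def using \<beta> B \<open>kn s \<noteq> 0\<close>
      by (auto intro!: derivative_eq_intros simp: exp_minus field_simps)
    have "y2 differentiable (at s)"
      using y2' real_differentiable_def by blast
    then show "y2 differentiable (at s) \<and> y3 differentiable (at s)"
      unfolding y3_def using diff \<open>kn s \<noteq> 0\<close> by (auto intro!: derivative_intros)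
    show "y2 s * kg s + y3 s * kn s = 1"
      using \<open>kn s \<noteq> 0\<close> by (simp add: y3_def field_simps)
    show "deriv y2 s = y3 s * tg s"
      using DERIV_imp_deriv[OF y2'] \<open>kn s \<noteq> 0\<close> by (simp add: y3_def field_simps)
  qed
qed

lemma unit_tangent_eq_sgn_scaleR:
  assumes "(\<gamma> has_vector_derivative f *\<^sub>R u) (at s)" and "f \<noteq> 0" and "norm u = 1"
  shows "unit_tangent \<gamma> s = sgn f *\<^sub>R u"
  using assms by (simp add: unit_tangent_def vector_derivative_at sgn_if)

lemma general_helix_imp_isophote:
  assumes I: "is_interval I" and cU: "continuous_on I U"
    and tangent: "\<And>s. s \<in> I \<Longrightarrow> unit_tangent \<gamma> s = sgn (f s) *\<^sub>R U s"
    and nz: "\<And>s. s \<in> I \<Longrightarrow> f s \<noteq> 0"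
    and "general_helix \<gamma> I"
  shows "isophote I U"
proof -
  obtain d c where "norm d = 1" and dc: "\<And>s. s \<in> I \<Longrightarrow> unit_tangent \<gamma> s \<bullet> d = c"
    using \<open>general_helix \<gamma> I\<close> unfolding general_helix_def by auto
  have "U s \<bullet> d \<in> {c, - c}" if "s \<in> I" for s
    using dc[OF that] tangent[OF that] nz[OF that] by (auto simp: sgn_if)
  then have "finite ((\<lambda>s. U s \<bullet> d) ` I)"
    by (auto intro: finite_subset[of _ "{c, - c}"])
  moreover have "continuous_on I (\<lambda>s. U s \<bullet> d)"
    using cU by (intro continuous_intros)
  ultimately have "(\<lambda>s. U s \<bullet> d) constant_on I"
    using continuous_finite_range_constant[OF is_interval_connected[OF I]] by blast
  with \<open>norm d = 1\<close> show ?thesis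
    unfolding isophote_def constant_on_def by auto
qed

lemma isophote_imp_general_helix:
  assumes I: "is_interval I"
    and der: "\<And>s. s \<in> I \<Longrightarrow> (\<gamma> has_vector_derivative f s *\<^sub>R U s) (at s)"
    and tangent: "\<And>s. s \<in> I \<Longrightarrow> unit_tangent \<gamma> s = sgn (f s) *\<^sub>R U s"
    and nz: "\<And>s. s \<in> I \<Longrightarrow> f s \<noteq> 0"
    and "isophote I U"
  shows "general_helix \<gamma> I"
proof -
  obtain l c where "norm l = 1" and lc: "\<And>s. s \<in> I \<Longrightarrow> U s \<bullet> l = c"
    using \<open>isophote I U\<close> unfolding isophote_def by auto
  have "\<exists>\<sigma>. \<forall>s\<in>I. sgn (f s) * c = \<sigma>"
  proof (cases "c = 0")
    case False
    have "((\<lambda>s. \<gamma> s \<bullet> l) has_real_derivative f s * c) (at s)" if "s \<in> I" for s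
      using bounded_linear.has_vector_derivative[OF bounded_linear_inner_left[of l] der[OF that]]
        lc[OF that]
      by (simp add: has_real_derivative_iff_has_vector_derivative)
    from DERIV_nonzero_sign_constant[OF I this] nz False
    have "(\<forall>s\<in>I. f s * c > 0) \<or> (\<forall>s\<in>I. f s * c < 0)" by auto
    then have "(\<forall>s\<in>I. sgn (f s) = sgn c) \<or> (\<forall>s\<in>I. sgn (f s) = - sgn c)"
      by (auto simp: sgn_if zero_less_mult_iff mult_less_0_iff)
    then show ?thesis by auto
  qed simp
  then obtain \<sigma> where "\<And>s. s \<in> I \<Longrightarrow> unit_tangent \<gamma> s \<bullet> l = \<sigma>"
    using tangent lc by auto
  with \<open>norm l = 1\<close> show ?thesis
    unfolding general_helix_def by auto
qed

lemma general_helix_iff_isophote_if_velocity_parallel: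
  assumes I: "is_interval I" and "regular_curve \<gamma> I" and "velocity_parallel \<gamma> U I"
    and nU: "\<And>s. s \<in> I \<Longrightarrow> norm (U s) = 1" and cU: "continuous_on I U"
  shows "general_helix \<gamma> I \<longleftrightarrow> isophote I U"
proof -
  obtain f where der: "\<And>s. s \<in> I \<Longrightarrow> (\<gamma> has_vector_derivative f s *\<^sub>R U s) (at s)"
    using \<open>velocity_parallel \<gamma> U I\<close> unfolding velocity_parallel_def by blast
  have nz: "f s \<noteq> 0" if "s \<in> I" for s
    using \<open>regular_curve \<gamma> I\<close> der[OF that] that
    by (auto simp: regular_curve_def vector_derivative_at)
  have tangent: "unit_tangent \<gamma> s = sgn (f s) *\<^sub>R U s" if "s \<in> I" for s
    using unit_tangent_eq_sgn_scaleR der nz nU that by blast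
  show ?thesis
    using general_helix_imp_isophote[OF I cU tangent nz]
      isophote_imp_general_helix[OF I der tangent nz] by blast
qed

lemma darboux_frame_continuous_on_normal:
  assumes "darboux_frame I \<alpha> T V U kg kn tg"
  shows "continuous_on I U"
  using assms unfolding darboux_frame_def
  by (meson continuous_at_imp_continuous_on has_vector_derivative_continuous)

theorem theorem3p24:
  fixes \<alpha> T V U \<gamma> :: "real \<Rightarrow> real^3" and kg kn tg :: "real \<Rightarrow> real" and I :: "real set"
  assumes "open I" and "is_interval I" and "I \<noteq> {}"
    and "darboux_frame I \<alpha> T V U kg kn tg"
    and "(\<forall>s\<in>I. kn s = 0 \<and> kg s \<noteq> 0 \<and> tg s \<noteq> 0 \<and>
              kg differentiable (at s) \<and> (deriv kg) differentiable (at s) \<and>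
              tg differentiable (at s) \<and>
              \<gamma> s = \<alpha> s + (1 / kg s) *\<^sub>R V s
                     - (deriv kg s / ((kg s)\<^sup>2 * tg s)) *\<^sub>R U s)
         \<or>
         (\<exists>\<beta> B c8 :: _. \<forall>s\<in>I. kn s \<noteq> 0 \<and>
              kg differentiable (at s) \<and> kn differentiable (at s) \<and>
              (\<beta> has_real_derivative (kg s * tg s / kn s)) (at s) \<and>
              (B has_real_derivative (exp (\<beta> s) * tg s / kn s)) (at s) \<and>
              (let y2 = exp (- \<beta> s) * (B s + c8);
                   y3 = - (kg s / kn s) * y2 + 1 / kn s
               in \<gamma> s = \<alpha> s + y2 *\<^sub>R V s + y3 *\<^sub>R U s))"
    and "regular_curve \<gamma> I"
  shows "general_helix \<gamma> I \<longleftrightarrow> isophote I U"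
proof -
  have "velocity_parallel \<gamma> U I"
    using assms(5) velocity_parallel_case_a[OF assms(1,4)] velocity_parallel_case_b[OF assms(1,4)]
    by blast
  moreover have "norm (U s) = 1" if "s \<in> I" for s
    using assms(4) that unfolding darboux_frame_def by blast
  ultimately show ?thesis
    using general_helix_iff_isophote_if_velocity_parallel[OF assms(2,6)]
      darboux_frame_continuous_on_normal[OF assms(4)] by blast
qed

end
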